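(* For every integer $n\ge1$ and every $0<\varepsilon\le\frac1{4n}$, \[ \mathbf{T}^\varepsilon_n\le 2(n+1)\,\varepsilon^2\,\Big\|\frac{\partial u_1}{\partial x_2}\Big\|^2_{L^\infty([1,4]\times\{1\})}. \]
   Context: Hersch's pipe is $\mathbf{H}=\{(x_1,x_2):x_1^2+x_2^2<1,\ x_1<0\}\cup\{(x_1,x_2):0<|x_2|<1,\ x_1\ge0\}\subseteq\mathbb{R}^2$; $u_1\in W^{1,2}_0(\mathbf{H})$ is its positive, $L^2$-normalized first Dirichlet eigenfunction (it exists, is $C^2$ up to the flat boundary piece $(0,\infty)\times\{1\}$, and $\partial u_1/\partial x_2$ has a continuous trace there). For $n\ge1$, $0<\varepsilon<1/(2n)$ and $i=0,\dots,n$: $\Sigma^\varepsilon_i=(2+\tfrac in-\varepsilon,2+\tfrac in+\varepsilon)$, $T^\varepsilon_i=\Sigma^\varepsilon_i\times[1,2)$, $\Gamma^\varepsilon_n=\bigcup_{i=0}^n(\Sigma^\varepsilon_i\times\{1\})$, $\mathbf{H}^\varepsilon_n=\mathbf{H}\cup\bigcup_{i=0}^nT^\varepsilon_i$, and \[ \mathbf{T}^\varepsilon_n=\sup_{\varphi\in C^\infty_0(\mathbf{H}^\varepsilon_n)}\Big\{2\int_{\Gamma^\varepsilon_n}\frac{\partial u_1}{\partial x_2}\varphi\,d\mathcal{H}^1-\int_{\mathbf{H}^\varepsilon_n}|\nabla\varphi|^2dx\Big\}. \] *)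

theory Defs
  imports "HOL-Analysis.Analysis" "HOL-Probability.Essential_Supremum"
begin

type_synonym pt = "real \<times> real"

definition Hpipe :: "pt set" where
  "Hpipe = {(x1, x2). x1^2 + x2^2 < 1 \<and> x1 < 0} \<union> {(x1, x2). 0 < \<bar>x2\<bar> \<and> \<bar>x2\<bar> < 1 \<and> x1 \<ge> 0}"

definition Sigma_eps :: "nat \<Rightarrow> real \<Rightarrow> nat \<Rightarrow> real set" where
  "Sigma_eps n \<epsilon> i = {2 + real i / real n - \<epsilon> <..< 2 + real i / real n + \<epsilon>}"

definition T_eps :: "nat \<Rightarrow> real \<Rightarrow> nat \<Rightarrow> pt set" where
  "T_eps n \<epsilon> i = Sigma_eps n \<epsilon> i \<times> {1..<2}"

definition H_eps :: "nat \<Rightarrow> real \<Rightarrow> pt set" where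
  "H_eps n \<epsilon> = Hpipe \<union> (\<Union>i\<in>{0..n}. T_eps n \<epsilon> i)"

fun dder :: "pt list \<Rightarrow> (pt \<Rightarrow> real) \<Rightarrow> pt \<Rightarrow> real" where
  "dder [] f = f"
| "dder (v # vs) f = (\<lambda>x. frechet_derivative (dder vs f) (at x) v)"

definition smooth_fun :: "(pt \<Rightarrow> real) \<Rightarrow> bool" where
  "smooth_fun f \<longleftrightarrow> (\<forall>vs x. dder vs f differentiable (at x))"

definition test_fun :: "pt set \<Rightarrow> (pt \<Rightarrow> real) \<Rightarrow> bool" where
  "test_fun U f \<longleftrightarrow> smooth_fun f \<and> compact (closure {x. f x \<noteq> 0}) \<and> closure {x. f x \<noteq> 0} \<subseteq> U"

definition grad :: "(pt \<Rightarrow> real) \<Rightarrow> pt \<Rightarrow> pt" where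
  "grad f x = (frechet_derivative f (at x) (1, 0), frechet_derivative f (at x) (0, 1))"

definition sqn :: "pt \<Rightarrow> real" where
  "sqn v = (fst v)^2 + (snd v)^2"

text \<open>\<open>u \<in> W\<^sup>1\<^sup>,\<^sup>2\<^sub>0(U)\<close> with weak gradient \<open>g\<close>: \<open>u\<close> is the \<open>W\<^sup>1\<^sup>,\<^sup>2\<close>-limit
  of test functions in \<open>C\<^sub>0\<^sup>\<infinity>(U)\<close>, with gradients converging in \<open>L\<^sup>2\<close> to \<open>g\<close>.\<close>
definition W012 :: "pt set \<Rightarrow> (pt \<Rightarrow> real) \<Rightarrow> (pt \<Rightarrow> pt) \<Rightarrow> bool" where
  "W012 U u g \<longleftrightarrow>
     u \<in> borel_measurable lborel \<and> g \<in> borel_measurable lborel \<and>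
     integrable lborel (\<lambda>x. (u x)^2) \<and> integrable lborel (\<lambda>x. sqn (g x)) \<and>
     (\<exists>\<phi>. (\<forall>k. test_fun U (\<phi> k)) \<and>
        (\<lambda>k. \<integral>x. (\<phi> k x - u x)^2 \<partial>lborel) \<longlonglongrightarrow> 0 \<and>
        (\<lambda>k. \<integral>x. sqn (grad (\<phi> k) x - g x) \<partial>lborel) \<longlonglongrightarrow> 0)"

definition first_dirichlet_eigenvalue :: "pt set \<Rightarrow> real" where
  "first_dirichlet_eigenvalue U = (INF w\<in>{w. test_fun U w \<and> (\<exists>x. w x \<noteq> 0)}.
      (\<integral>x. sqn (grad w x) \<partial>lborel) / (\<integral>x. (w x)^2 \<partial>lborel))"

text \<open>\<open>u\<close> (with weak gradient \<open>g\<close>) is the positive, \<open>L\<^sup>2\<close>-normalised first Dirichlet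
  eigenfunction of \<open>U\<close>; the representative is the continuous one on \<open>U\<close>, extended by 0.\<close>
definition first_dirichlet_eigenfunction :: "pt set \<Rightarrow> (pt \<Rightarrow> real) \<Rightarrow> (pt \<Rightarrow> pt) \<Rightarrow> bool" where
  "first_dirichlet_eigenfunction U u g \<longleftrightarrow>
     W012 U u g \<and>
     continuous_on U u \<and> (\<forall>x\<in>U. u x > 0) \<and> (\<forall>x. x \<notin> U \<longrightarrow> u x = 0) \<and>
     (\<integral>x. (u x)^2 \<partial>lborel) = 1 \<and>
     (\<forall>\<psi>. test_fun U \<psi> \<longrightarrow>
        (\<integral>x. g x \<bullet> grad \<psi> x \<partial>lborel) =
        first_dirichlet_eigenvalue U
        * (\<integral>x. u x * \<psi> x \<partial>lborel))"

text \<open>Trace of \<open>\<partial>u/\<partial>x\<^sub>2\<close> on the flat boundary piece \<open>x\<^sub>2 = 1\<close> (derivative from below).\<close>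
definition dtrace :: "(pt \<Rightarrow> real) \<Rightarrow> real \<Rightarrow> real" where
  "dtrace u x1 = (THE d. ((\<lambda>t. u (x1, t)) has_real_derivative d) (at_left 1))"

definition Gamma_eps :: "nat \<Rightarrow> real \<Rightarrow> real set" where
  "Gamma_eps n \<epsilon> = (\<Union>i\<in>{0..n}. Sigma_eps n \<epsilon> i)"

text \<open>The torsion-like quantity \<open>\<T>\<^sup>\<epsilon>\<^sub>n\<close>; the boundary integral over
  \<open>\<Gamma> = \<Gamma>_eps \<times> {1}\<close> w.r.t. \<open>\<H>\<^sup>1\<close> is the Lebesgue integral in \<open>x\<^sub>1\<close>.\<close>
definition Tors :: "(pt \<Rightarrow> real) \<Rightarrow> nat \<Rightarrow> real \<Rightarrow> ereal" where
  "Tors u n \<epsilon> = (SUP \<phi>\<in>{\<phi>. test_fun (H_eps n \<epsilon>) \<phi>}.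
      ereal (2 * (LINT x1:Gamma_eps n \<epsilon>|lborel. dtrace u x1 * \<phi> (x1, 1))
             - (\<integral>x. sqn (grad \<phi> x) \<partial>lborel)))"

definition Linf_norm_14 :: "(real \<Rightarrow> real) \<Rightarrow> ereal" where
  "Linf_norm_14 f = esssup (restrict_space lborel {1..4}) (\<lambda>t. ereal \<bar>f t\<bar>)"

end

theory Submission
  imports Defs
begin

text \<open>On each tooth \<open>T\<^sub>i\<close> a test function \<open>\<phi>\<close> of \<open>H\<^sup>\<epsilon>\<^sub>n\<close> vanishes on the top edge
  \<open>x\<^sub>2 = 2\<close> and on both vertical sides. Where \<open>|\<partial>u\<^sub>1/\<partial>x\<^sub>2| \<le> M\<close>, an exponentially weighted
  fundamental theorem of calculus in \<open>x\<^sub>2\<close> bounds \<open>2 M |\<phi>(x\<^sub>1,1)|\<close> by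
  \<open>\<integral>\<^sub>1\<^sup>2 (\<partial>\<^sub>2\<phi>)\<^sup>2 + \<phi>\<^sup>2/\<epsilon>\<^sup>2 + M\<^sup>2\<epsilon>\<close>; integrating over the tooth width \<open>2\<epsilon>\<close> and using the
  one-dimensional Poincare inequality \<open>\<integral> \<phi>\<^sup>2/\<epsilon>\<^sup>2 \<le> \<integral> (\<partial>\<^sub>1\<phi>)\<^sup>2\<close> across it yields
  \<open>2 M \<integral>|\<phi>(x\<^sub>1,1)| \<le> \<integral>\<^bsub>T\<^sub>i\<^esub> |\<nabla>\<phi>|\<^sup>2 + 2 M\<^sup>2\<epsilon>\<^sup>2\<close>. The \<open>n + 1\<close> teeth are disjoint, so
  summing bounds the boundary term by the Dirichlet energy plus \<open>2 (n + 1) \<epsilon>\<^sup>2 M\<^sup>2\<close>.\<close>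

lemma fundamental_theorem_of_calculus_real:
  fixes f f' :: "real \<Rightarrow> real"
  assumes "a \<le> b" "\<And>x. x \<in> {a..b} \<Longrightarrow> (f has_real_derivative f' x) (at x)"
  shows "(f' has_integral (f b - f a)) {a..b}"
  using assms
  by (intro fundamental_theorem_of_calculus)
     (auto simp: has_real_derivative_iff_has_vector_derivative intro: has_vector_derivative_at_within)

text \<open>With \<open>T x = tan ((x - c) / e)\<close> one has
  \<open>f'\<^sup>2 + (T f\<^sup>2 / e)' - f\<^sup>2 / e\<^sup>2 = (f' + T f / e)\<^sup>2\<close>, and \<open>T f\<^sup>2 / e\<close> vanishes at both ends.\<close>
lemma poincare_interval:
  fixes f f' :: "real \<Rightarrow> real"
  assumes e: "0 < e"
    and f': "\<And>x. x \<in> {c-e..c+e} \<Longrightarrow> (f has_real_derivative f' x) (at x)"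
    and cont_f': "continuous_on {c-e..c+e} f'"
    and "f (c-e) = 0" "f (c+e) = 0"
  shows "integral {c-e..c+e} (\<lambda>x. (f x)^2 / e^2) \<le> integral {c-e..c+e} (\<lambda>x. (f' x)^2)"
proof -
  define T where "T x = tan ((x - c)/e)" for x
  define S where "S x = inverse ((cos ((x - c)/e))^2)" for x
  define D where "D x = S x / e^2 * (f x)^2 + T x / e * (2 * f x * f' x)" for x
  have cos_pos: "cos ((x - c)/e) > 0" if "x \<in> {c-e..c+e}" for x
  proof -
    have "-1 \<le> (x - c)/e \<and> (x - c)/e \<le> 1" using that e by (auto simp: field_simps)
    moreover have "1 < pi/2" using pi_gt3 by simp
    ultimately have "-(pi/2) < (x - c)/e \<and> (x - c)/e < pi/2" by linarith
    then show ?thesis by (intro cos_gt_zero_pi) auto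
  qed
  have D: "((\<lambda>x. T x / e * (f x)^2) has_real_derivative D x) (at x)" if "x \<in> {c-e..c+e}" for x
  proof -
    have "(tan has_real_derivative S x) (at ((x-c)/e))"
      unfolding S_def using cos_pos[OF that] by (intro DERIV_tan) simp
    then have "(T has_real_derivative S x * (1/e)) (at x)"
      unfolding T_def
      by (rule DERIV_chain2[of tan _ "\<lambda>x. (x - c)/e"]) (use e in \<open>auto intro!: derivative_eq_intros\<close>)
    then show ?thesis unfolding D_def
      using e by (auto intro!: derivative_eq_intros f'[OF that] simp: field_simps power2_eq_square)
  qed
  have "(D has_integral 0) {c-e..c+e}"
    using fundamental_theorem_of_calculus_real[of "c-e" "c+e" "\<lambda>x. T x / e * (f x)^2" D] D e assms
    by simp
  then have int_D: "((\<lambda>x. (f' x)^2 + D x) has_integral (integral {c-e..c+e} (\<lambda>x. (f' x)^2) + 0)) {c-e..c+e}"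
    by (intro has_integral_add integrable_integral integrable_continuous_interval continuous_intros cont_f')
  have "continuous_on {c-e..c+e} f"
    using f' by (meson DERIV_isCont continuous_at_imp_continuous_on)
  then have "((\<lambda>x. (f x)^2 / e^2) has_integral integral {c-e..c+e} (\<lambda>x. (f x)^2 / e^2)) {c-e..c+e}"
    using e by (intro integrable_integral integrable_continuous_interval continuous_intros) auto
  moreover have "(f x)^2 / e^2 \<le> (f' x)^2 + D x" if "x \<in> {c-e..c+e}" for x
  proof -
    have "S x = 1 + (T x)^2" unfolding S_def T_def using cos_pos[OF that]
      by (simp add: tan_def field_simps sin_squared_eq)
    then have "(f' x)^2 + D x - (f x)^2 / e^2 = (f' x + T x * f x / e)^2"
      unfolding D_def using e by (simp add: field_simps power2_eq_square)
    then show ?thesis by (smt (verit) zero_le_power2)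
  qed
  ultimately show ?thesis using has_integral_le[OF _ int_D] by simp
qed

text \<open>With the weight \<open>w t = exp (-(t - 1) / e)\<close>, \<open>-2 M (g w)'\<close> is bounded by
  \<open>g'\<^sup>2 + g\<^sup>2 / e\<^sup>2 + 2 M\<^sup>2 w\<^sup>2\<close> (a sum of two squares), and \<open>\<integral>\<^sub>1\<^sup>2 2 M\<^sup>2 w\<^sup>2 \<le> M\<^sup>2 e\<close>.\<close>
lemma trace_bound_interval:
  fixes g g' :: "real \<Rightarrow> real"
  assumes e: "0 < e"
    and g': "\<And>t. t \<in> {1..2} \<Longrightarrow> (g has_real_derivative g' t) (at t)"
    and cont_g': "continuous_on {1..2} g'"
    and g2: "g 2 = 0"
  shows "2 * M * g 1 \<le> integral {1..2} (\<lambda>t. (g' t)^2 + (g t)^2 / e^2) + M^2 * e"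
proof -
  define w where "w t = exp (-(t-1)/e)" for t
  have w': "(w has_real_derivative (- w t / e)) (at t)" for t
    unfolding w_def using e by (auto intro!: derivative_eq_intros simp: field_simps)
  have w1: "w 1 = 1" unfolding w_def by simp
  define G' where "G' t = g' t * w t + g t * (- w t / e)" for t
  have int_G': "(G' has_integral (g 2 * w 2 - g 1 * w 1)) {1..2}"
    unfolding G'_def by (rule fundamental_theorem_of_calculus_real) (auto intro!: derivative_eq_intros g' w')
  define K where "K t = -(M^2*e) * (w t)^2" for t
  have "((\<lambda>t. -(M^2*e) * (2 * w t * (- w t / e))) has_integral (K 2 - K 1)) {1..2}"
    unfolding K_def by (rule fundamental_theorem_of_calculus_real) (auto intro!: derivative_eq_intros w')
  moreover have "-(M^2*e) * (2 * w t * (- w t / e)) = 2*M^2*(w t)^2" for t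
    using e by (simp add: field_simps power2_eq_square)
  ultimately have int_w: "((\<lambda>t. 2*M^2*(w t)^2) has_integral (K 2 - K 1)) {1..2}"
    by simp
  have "continuous_on {1..2} g"
    using g' by (meson DERIV_isCont continuous_at_imp_continuous_on)
  then have int_g: "((\<lambda>t. (g' t)^2 + (g t)^2 / e^2) has_integral
      integral {1..2} (\<lambda>t. (g' t)^2 + (g t)^2 / e^2)) {1..2}"
    using e cont_g' by (intro integrable_integral integrable_continuous_interval continuous_intros) auto
  have "(-2*M) * G' t \<le> ((g' t)^2 + (g t)^2 / e^2) + 2*M^2*(w t)^2" for t
  proof -
    have "((g' t)^2 + (g t)^2 / e^2) + 2*M^2*(w t)^2 - (-2*M) * G' t
        = (g' t + M * w t)^2 + (g t / e - M * w t)^2"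
      unfolding G'_def using e by (simp add: field_simps power2_eq_square)
    then show ?thesis by (smt (verit) zero_le_power2)
  qed
  from has_integral_le[OF has_integral_mult_right[OF int_G'] has_integral_add[OF int_g int_w] this]
  have "(-2*M) * (g 2 * w 2 - g 1 * w 1) \<le> integral {1..2} (\<lambda>t. (g' t)^2 + (g t)^2 / e^2) + (K 2 - K 1)"
    by simp
  moreover have "K 2 - K 1 \<le> M^2 * e" unfolding K_def w1 using e by simp
  ultimately show ?thesis using g2 w1 by simp
qed

lemma integral_cbox_Pair_iterated:
  fixes f :: "real \<times> real \<Rightarrow> real"
  assumes "continuous_on UNIV f"
  shows "integral (cbox (a,c) (b,d)) f = integral {a..b} (\<lambda>x. integral {c..d} (\<lambda>t. f (x,t)))"
  using integral_prod_continuous[of a c b d f] continuous_on_subset[OF assms] by (simp add: cbox_interval)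

lemma integral_iterated_swap:
  fixes f :: "real \<times> real \<Rightarrow> real"
  assumes "continuous_on UNIV f"
  shows "integral {a..b} (\<lambda>x. integral {c..d} (\<lambda>t. f (x,t))) =
         integral {c..d} (\<lambda>t. integral {a..b} (\<lambda>x. f (x,t)))"
  using integral_swap_continuous[of a c b d "\<lambda>x t. f (x,t)"] continuous_on_subset[OF assms]
  by (simp add: cbox_interval)

lemma continuous_on_integral_snd:
  fixes f :: "real \<times> real \<Rightarrow> real"
  assumes "continuous_on UNIV f"
  shows "continuous_on S (\<lambda>x. integral {c..d} (\<lambda>t. f (x,t)))"
  using integral_continuous_on_param[of S c d "\<lambda>x t. f (x,t)"] continuous_on_subset[OF assms]
  by (simp add: cbox_interval)

lemma continuous_on_integral_fst:
  fixes f :: "real \<times> real \<Rightarrow> real"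
  assumes "continuous_on UNIV f"
  shows "continuous_on S (\<lambda>t. integral {a..b} (\<lambda>x. f (x,t)))"
proof -
  have "continuous_on UNIV (\<lambda>z. f (prod.swap z))"
    by (rule continuous_on_compose2[OF assms continuous_on_swap]) auto
  then have "continuous_on UNIV (\<lambda>(t,x). f (x,t))"
    by (simp add: case_prod_unfold prod.swap_def)
  then show ?thesis
    using integral_continuous_on_param[of S a b "\<lambda>t x. f (x,t)"] continuous_on_subset
    by (force simp: cbox_interval)
qed

lemma rectangle_poincare:
  fixes \<phi> p :: "real \<times> real \<Rightarrow> real"
  assumes e: "0 < e"
    and cont: "continuous_on UNIV \<phi>" "continuous_on UNIV p"
    and p: "\<And>x t. ((\<lambda>x. \<phi> (x,t)) has_real_derivative p (x,t)) (at x)"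
    and sides: "\<And>t. t \<in> {a..b} \<Longrightarrow> \<phi> (c-e,t) = 0 \<and> \<phi> (c+e,t) = 0"
  shows "integral (cbox (c-e,a) (c+e,b)) (\<lambda>z. (\<phi> z)^2 / e^2) \<le> integral (cbox (c-e,a) (c+e,b)) (\<lambda>z. (p z)^2)"
proof -
  have cont_\<phi>2: "continuous_on UNIV (\<lambda>z. (\<phi> z)^2 / e^2)"
    using e cont by (intro continuous_intros) auto
  have cont_p2: "continuous_on UNIV (\<lambda>z. (p z)^2)"
    using cont by (intro continuous_intros)
  have cont_p: "continuous_on S (\<lambda>x. p (x,t))" for S t
    by (rule continuous_on_subset[of UNIV], intro continuous_on_compose2[OF cont(2)] continuous_intros) auto
  have "integral (cbox (c-e,a) (c+e,b)) (\<lambda>z. (\<phi> z)^2 / e^2) =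
        integral {a..b} (\<lambda>t. integral {c-e..c+e} (\<lambda>x. (\<phi> (x,t))^2 / e^2))"
    by (rule trans[OF integral_cbox_Pair_iterated[OF cont_\<phi>2] integral_iterated_swap[OF cont_\<phi>2]])
  also have "\<dots> \<le> integral {a..b} (\<lambda>t. integral {c-e..c+e} (\<lambda>x. (p (x,t))^2))"
    using sides
    by (intro integral_le integrable_continuous_interval continuous_on_integral_fst cont_\<phi>2 cont_p2
        poincare_interval e p cont_p) auto
  also have "\<dots> = integral (cbox (c-e,a) (c+e,b)) (\<lambda>z. (p z)^2)"
    by (rule sym, rule trans[OF integral_cbox_Pair_iterated[OF cont_p2] integral_iterated_swap[OF cont_p2]])
  finally show ?thesis .
qed

lemma rectangle_trace_bound:
  fixes \<phi> q :: "real \<times> real \<Rightarrow> real"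
  assumes e: "0 < e" and ab: "a \<le> b"
    and cont: "continuous_on UNIV \<phi>" "continuous_on UNIV q"
    and q: "\<And>x t. ((\<lambda>t. \<phi> (x,t)) has_real_derivative q (x,t)) (at t)"
    and top: "\<And>x. \<phi> (x,2) = 0"
  shows "2 * M * integral {a..b} (\<lambda>x. \<bar>\<phi> (x,1)\<bar>)
           \<le> integral (cbox (a,1) (b,2)) (\<lambda>z. (q z)^2 + (\<phi> z)^2 / e^2) + M^2 * e * (b - a)"
proof -
  define F where "F z = (q z)^2 + (\<phi> z)^2 / e^2" for z
  have cont_F: "continuous_on UNIV F" unfolding F_def using e cont by (intro continuous_intros) auto
  have cont_q: "continuous_on S (\<lambda>t. q (x,t))" for S x
    by (rule continuous_on_subset[of UNIV], intro continuous_on_compose2[OF cont(2)] continuous_intros) auto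
  have cont_\<phi>: "continuous_on S (\<lambda>x. \<phi> (x,t))" for S t
    by (rule continuous_on_subset[of UNIV], intro continuous_on_compose2[OF cont(1)] continuous_intros) auto
  have pointwise: "2 * M * \<bar>\<phi> (x,1)\<bar> \<le> integral {1..2} (\<lambda>t. F (x,t)) + M^2 * e" for x
  proof -
    have "2 * M * \<phi> (x,1) \<le> integral {1..2} (\<lambda>t. F (x,t)) + M^2 * e"
      using trace_bound_interval[of e "\<lambda>t. \<phi> (x,t)" "\<lambda>t. q (x,t)" M] e q cont_q top
      unfolding F_def by simp
    moreover have "2 * M * (- \<phi> (x,1)) \<le> integral {1..2} (\<lambda>t. F (x,t)) + M^2 * e"
      using trace_bound_interval[of e "\<lambda>t. - \<phi> (x,t)" "\<lambda>t. - q (x,t)" M] e top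
      unfolding F_def by (simp add: DERIV_minus q continuous_on_minus cont_q)
    ultimately show ?thesis by (auto simp: abs_if)
  qed
  have "2 * M * integral {a..b} (\<lambda>x. \<bar>\<phi> (x,1)\<bar>) = integral {a..b} (\<lambda>x. 2 * M * \<bar>\<phi> (x,1)\<bar>)"
    by simp
  also have "\<dots> \<le> integral {a..b} (\<lambda>x. integral {1..2} (\<lambda>t. F (x,t)) + M^2 * e)"
    by (intro integral_le integrable_continuous_interval pointwise continuous_intros cont_\<phi>
        continuous_on_integral_snd cont_F)
  also have "\<dots> = integral {a..b} (\<lambda>x. integral {1..2} (\<lambda>t. F (x,t))) + M^2 * e * (b - a)"
    using ab by (subst integral_add) (auto intro!: integrable_continuous_interval continuous_on_integral_snd cont_F)
  also have "\<dots> = integral (cbox (a,1) (b,2)) F + M^2 * e * (b - a)"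
    by (simp add: integral_cbox_Pair_iterated[OF cont_F])
  finally show ?thesis unfolding F_def .
qed

lemma rectangle_energy_bound:
  fixes \<phi> p q :: "real \<times> real \<Rightarrow> real"
  assumes e: "0 < e"
    and cont: "continuous_on UNIV \<phi>" "continuous_on UNIV p" "continuous_on UNIV q"
    and p: "\<And>x t. ((\<lambda>x. \<phi> (x,t)) has_real_derivative p (x,t)) (at x)"
    and q: "\<And>x t. ((\<lambda>t. \<phi> (x,t)) has_real_derivative q (x,t)) (at t)"
    and top: "\<And>x. \<phi> (x,2) = 0"
    and sides: "\<And>t. t \<in> {1..2} \<Longrightarrow> \<phi> (c-e,t) = 0 \<and> \<phi> (c+e,t) = 0"
  shows "2 * M * integral {c-e..c+e} (\<lambda>x. \<bar>\<phi> (x,1)\<bar>)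
           \<le> integral (cbox (c-e,1) (c+e,2)) (\<lambda>z. (p z)^2 + (q z)^2) + 2 * M^2 * e^2"
proof -
  let ?R = "cbox (c-e,1) (c+e,2)"
  have integrable: "f integrable_on ?R" if "continuous_on UNIV f" for f :: "real \<times> real \<Rightarrow> real"
    using that by (blast intro: integrable_continuous continuous_on_subset)
  have int_p2: "(\<lambda>z. (p z)^2) integrable_on ?R" and int_q2: "(\<lambda>z. (q z)^2) integrable_on ?R"
    and int_\<phi>2: "(\<lambda>z. (\<phi> z)^2 / e^2) integrable_on ?R"
    by (intro integrable continuous_intros cont | use e in simp)+
  have "2 * M * integral {c-e..c+e} (\<lambda>x. \<bar>\<phi> (x,1)\<bar>)
          \<le> integral ?R (\<lambda>z. (q z)^2 + (\<phi> z)^2 / e^2) + M^2 * e * ((c + e) - (c - e))"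
    using e cont(1,3) q top by (intro rectangle_trace_bound) auto
  also have "\<dots> = integral ?R (\<lambda>z. (q z)^2) + integral ?R (\<lambda>z. (\<phi> z)^2 / e^2) + 2 * M^2 * e^2"
    using int_q2 int_\<phi>2 by (simp add: integral_add power2_eq_square)
  also have "\<dots> \<le> integral ?R (\<lambda>z. (q z)^2) + integral ?R (\<lambda>z. (p z)^2) + 2 * M^2 * e^2"
    using rectangle_poincare[OF e cont(1,2) p sides] by simp
  also have "\<dots> = integral ?R (\<lambda>z. (p z)^2 + (q z)^2) + 2 * M^2 * e^2"
    using int_p2 int_q2 by (simp add: integral_add)
  finally show ?thesis .
qed

lemma sum_integral_disjoint_le_integral:
  fixes F :: "'a::euclidean_space \<Rightarrow> real"
  assumes I: "finite I" "disjoint_family_on Q I"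
    and Q: "\<And>i. i \<in> I \<Longrightarrow> Q i \<in> sets lborel"
    and F: "integrable lborel F" "\<And>x. 0 \<le> F x"
  shows "(\<Sum>i\<in>I. integral (Q i) F) \<le> integral\<^sup>L lborel F"
proof -
  have set_int: "set_integrable lborel (Q i) F" if "i \<in> I" for i
    unfolding set_integrable_def using Q[OF that] F(1) by (rule integrable_mult_indicator)
  have "(\<Sum>i\<in>I. integral (Q i) F) = (\<Sum>i\<in>I. LINT x:Q i|lborel. F x)"
    using set_borel_integral_eq_integral(2)[OF set_int] by simp
  also have "\<dots> = (LINT x:(\<Union>i\<in>I. Q i)|lborel. F x)"
    using I(2) by (intro set_integral_finite_UN_AE[symmetric] I(1) Q set_int always_eventually)
       (auto simp: disjoint_family_on_def)
  also have "\<dots> \<le> integral\<^sup>L lborel F"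
    unfolding set_lebesgue_integral_def
    using I Q F by (intro integral_mono integrable_mult_indicator) (auto simp: indicator_def)
  finally show ?thesis .
qed

lemma set_integral_union_le_sum:
  fixes d f :: "real \<Rightarrow> real"
  assumes I: "finite I" and M: "0 \<le> M" and f: "continuous_on UNIV f"
    and A: "\<And>i. i \<in> I \<Longrightarrow> A i \<subseteq> {a i..b i}"
    and d: "AE x in lborel. x \<in> (\<Union>i\<in>I. A i) \<longrightarrow> \<bar>d x\<bar> \<le> M"
  shows "(LINT x:(\<Union>i\<in>I. A i)|lborel. d x * f x) \<le> M * (\<Sum>i\<in>I. integral {a i..b i} (\<lambda>x. \<bar>f x\<bar>))"
proof -
  define R where "R x = (\<Sum>i\<in>I. indicator {a i..b i} x * (M * \<bar>f x\<bar>))" for x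
  have set_int_abs: "set_integrable lborel {a i..b i} (\<lambda>x. \<bar>f x\<bar>)" for i
    unfolding set_integrable_def
    by (intro borel_integrable_compact continuous_intros continuous_on_subset[OF f]) auto
  have set_int: "set_integrable lborel {a i..b i} (\<lambda>x. M * \<bar>f x\<bar>)" for i
    using set_int_abs by (rule set_integrable_mult_right)
  have R_int: "integrable lborel R"
    unfolding R_def using set_int unfolding set_integrable_def
    by (intro Bochner_Integration.integrable_sum) simp
  have R_nonneg: "0 \<le> R x" for x
    unfolding R_def using M by (intro sum_nonneg) auto
  have "integral\<^sup>L lborel R = (\<Sum>i\<in>I. LINT x:{a i..b i}|lborel. M * \<bar>f x\<bar>)"
    unfolding R_def set_lebesgue_integral_def
    using set_int unfolding set_integrable_def by (simp add: Bochner_Integration.integral_sum)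
  also have "\<dots> = M * (\<Sum>i\<in>I. integral {a i..b i} (\<lambda>x. \<bar>f x\<bar>))"
    by (simp add: set_borel_integral_eq_integral(2)[OF set_int_abs] sum_distrib_left)
  finally have R: "integral\<^sup>L lborel R = M * (\<Sum>i\<in>I. integral {a i..b i} (\<lambda>x. \<bar>f x\<bar>))" .
  show ?thesis
  proof (cases "set_integrable lborel (\<Union>i\<in>I. A i) (\<lambda>x. d x * f x)")
    case False
    then have "(LINT x:(\<Union>i\<in>I. A i)|lborel. d x * f x) = 0"
      unfolding set_integrable_def set_lebesgue_integral_def by (rule not_integrable_integral_eq)
    then show ?thesis
      using R Bochner_Integration.integral_nonneg[of lborel R] R_nonneg by simp
  next
    case True
    have "indicator (\<Union>i\<in>I. A i) x * (d x * f x) \<le> R x"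
      if "x \<in> (\<Union>i\<in>I. A i) \<longrightarrow> \<bar>d x\<bar> \<le> M" for x
    proof (cases "x \<in> (\<Union>i\<in>I. A i)")
      case True
      then obtain j where j: "j \<in> I" "x \<in> A j" by blast
      have "d x * f x \<le> \<bar>d x\<bar> * \<bar>f x\<bar>"
        by (metis abs_ge_self abs_mult)
      also have "\<dots> \<le> M * \<bar>f x\<bar>"
        using that True by (simp add: mult_right_mono)
      also have "\<dots> = indicator {a j..b j} x * (M * \<bar>f x\<bar>)"
        using A[OF j(1)] j(2) by auto
      also have "\<dots> \<le> R x"
        unfolding R_def using I j(1) M by (intro member_le_sum) auto
      finally show ?thesis using True by simp
    qed (simp add: R_nonneg)
    then have "(LINT x:(\<Union>i\<in>I. A i)|lborel. d x * f x) \<le> integral\<^sup>L lborel R"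
      unfolding set_lebesgue_integral_def using True d R_int unfolding set_integrable_def
      by (intro integral_mono_AE) (auto elim!: eventually_mono)
    then show ?thesis using R by simp
  qed
qed

lemma has_real_derivative_partial_fst:
  fixes \<phi> :: "real \<times> real \<Rightarrow> real"
  assumes "\<phi> differentiable (at (x,t))"
  shows "((\<lambda>s. \<phi> (s,t)) has_real_derivative frechet_derivative \<phi> (at (x,t)) (1,0)) (at x)"
proof -
  have D: "(\<phi> has_derivative frechet_derivative \<phi> (at (x,t))) (at (x,t))"
    using assms frechet_derivative_works by blast
  have "((\<lambda>s. (s,t)) has_derivative (\<lambda>s. (s,0))) (at x)"
    by (auto intro!: derivative_eq_intros)
  from has_derivative_compose[OF this D]
  have "((\<lambda>s. \<phi> (s,t)) has_derivative (\<lambda>s. frechet_derivative \<phi> (at (x,t)) (s,0))) (at x)" .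
  moreover have "(\<lambda>s. frechet_derivative \<phi> (at (x,t)) (s,0)) = (*) (frechet_derivative \<phi> (at (x,t)) (1,0))"
  proof
    fix s
    have "frechet_derivative \<phi> (at (x,t)) (s *\<^sub>R (1,0)) = s *\<^sub>R frechet_derivative \<phi> (at (x,t)) (1,0)"
      by (rule linear_scale[OF has_derivative_linear[OF D]])
    then show "frechet_derivative \<phi> (at (x,t)) (s,0) = frechet_derivative \<phi> (at (x,t)) (1,0) * s"
      by (simp add: mult.commute)
  qed
  ultimately show ?thesis unfolding has_field_derivative_def by simp
qed

lemma has_real_derivative_partial_snd:
  fixes \<phi> :: "real \<times> real \<Rightarrow> real"
  assumes "\<phi> differentiable (at (x,t))"
  shows "((\<lambda>s. \<phi> (x,s)) has_real_derivative frechet_derivative \<phi> (at (x,t)) (0,1)) (at t)"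
proof -
  have D: "(\<phi> has_derivative frechet_derivative \<phi> (at (x,t))) (at (x,t))"
    using assms frechet_derivative_works by blast
  have "((\<lambda>s. (x,s)) has_derivative (\<lambda>s. (0,s))) (at t)"
    by (auto intro!: derivative_eq_intros)
  from has_derivative_compose[OF this D]
  have "((\<lambda>s. \<phi> (x,s)) has_derivative (\<lambda>s. frechet_derivative \<phi> (at (x,t)) (0,s))) (at t)" .
  moreover have "(\<lambda>s. frechet_derivative \<phi> (at (x,t)) (0,s)) = (*) (frechet_derivative \<phi> (at (x,t)) (0,1))"
  proof
    fix s
    have "frechet_derivative \<phi> (at (x,t)) (s *\<^sub>R (0,1)) = s *\<^sub>R frechet_derivative \<phi> (at (x,t)) (0,1)"
      by (rule linear_scale[OF has_derivative_linear[OF D]])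
    then show "frechet_derivative \<phi> (at (x,t)) (0,s) = frechet_derivative \<phi> (at (x,t)) (0,1) * s"
      by (simp add: mult.commute)
  qed
  ultimately show ?thesis unfolding has_field_derivative_def by simp
qed

lemma test_fun_partials:
  assumes "test_fun U \<phi>"
  shows "continuous_on UNIV \<phi>"
    and "continuous_on UNIV (\<lambda>z. fst (grad \<phi> z))" "continuous_on UNIV (\<lambda>z. snd (grad \<phi> z))"
    and "((\<lambda>s. \<phi> (s,t)) has_real_derivative fst (grad \<phi> (x,t))) (at x)"
    and "((\<lambda>s. \<phi> (x,s)) has_real_derivative snd (grad \<phi> (x,t))) (at t)"
proof -
  have smooth: "dder vs \<phi> differentiable (at z)" for vs z
    using assms unfolding test_fun_def smooth_fun_def by blast
  have "continuous_on UNIV (dder vs \<phi>)" for vs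
    using smooth by (intro continuous_at_imp_continuous_on) (auto intro: differentiable_imp_continuous_within)
  from this[of "[]"] this[of "[(1,0)]"] this[of "[(0,1)]"]
  show "continuous_on UNIV \<phi>"
    and "continuous_on UNIV (\<lambda>z. fst (grad \<phi> z))" "continuous_on UNIV (\<lambda>z. snd (grad \<phi> z))"
    by (simp_all add: grad_def)
  show "((\<lambda>s. \<phi> (s,t)) has_real_derivative fst (grad \<phi> (x,t))) (at x)"
    using has_real_derivative_partial_fst smooth[of "[]"] by (simp add: grad_def)
  show "((\<lambda>s. \<phi> (x,s)) has_real_derivative snd (grad \<phi> (x,t))) (at t)"
    using has_real_derivative_partial_snd smooth[of "[]"] by (simp add: grad_def)
qed

lemma test_fun_zero_outside:
  assumes "test_fun U \<phi>" "x \<notin> U"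
  shows "\<phi> x = 0"
proof (rule ccontr)
  assume "\<phi> x \<noteq> 0"
  then have "x \<in> closure {x. \<phi> x \<noteq> 0}" using closure_subset[of "{x. \<phi> x \<noteq> 0}"] by auto
  then show False using assms unfolding test_fun_def by auto
qed

lemma grad_zero_outside_support:
  assumes "x \<notin> closure {x. \<phi> x \<noteq> 0}"
  shows "grad \<phi> x = 0"
proof -
  have "(\<phi> has_derivative (\<lambda>_. 0)) (at x)"
  proof (rule has_derivative_transform_within_open[of "\<lambda>_. 0" _ _ _ "- closure {x. \<phi> x \<noteq> 0}"])
    show "0 = \<phi> y" if "y \<in> - closure {x. \<phi> x \<noteq> 0}" for y
      using that closure_subset[of "{x. \<phi> x \<noteq> 0}"] by auto
  qed (use assms in auto)
  then have "frechet_derivative \<phi> (at x) = (\<lambda>_. 0)"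
    by (metis frechet_derivative_at)
  then show ?thesis by (simp add: grad_def zero_prod_def)
qed

lemma test_fun_integrable_sqn_grad:
  assumes "test_fun U \<phi>"
  shows "integrable lborel (\<lambda>x. sqn (grad \<phi> x))"
proof -
  let ?K = "closure {x. \<phi> x \<noteq> 0}"
  have "continuous_on UNIV (\<lambda>x. sqn (grad \<phi> x))"
    unfolding sqn_def by (intro continuous_on_add continuous_on_power test_fun_partials(2,3)[OF assms])
  moreover have "compact ?K" using assms unfolding test_fun_def by simp
  ultimately have int: "integrable lborel (\<lambda>x. indicator ?K x *\<^sub>R sqn (grad \<phi> x))"
    by (intro borel_integrable_compact) (auto intro: continuous_on_subset)
  have eq: "(\<lambda>x. indicator ?K x *\<^sub>R sqn (grad \<phi> x)) = (\<lambda>x. sqn (grad \<phi> x))"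
  proof
    fix x show "indicator ?K x *\<^sub>R sqn (grad \<phi> x) = sqn (grad \<phi> x)"
      by (cases "x \<in> ?K") (simp_all add: grad_zero_outside_support sqn_def)
  qed
  show ?thesis using int by (simp only: eq)
qed

lemma tooth_centres_separated:
  fixes n i j :: nat and \<epsilon> :: real
  assumes n: "n \<ge> 1" and \<epsilon>: "\<epsilon> \<le> 1 / (4 * real n)"
    and close: "\<bar>real i / real n - real j / real n\<bar> \<le> 2 * \<epsilon>"
  shows "i = j"
proof (rule ccontr)
  assume "i \<noteq> j"
  then have "1 \<le> \<bar>real i - real j\<bar>" by linarith
  also have "\<bar>real i - real j\<bar> = real n * \<bar>real i / real n - real j / real n\<bar>"
    using n by (simp add: field_simps abs_mult)
  also have "\<dots> \<le> real n * (2 * \<epsilon>)"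
    using close by (intro mult_left_mono) auto
  also have "\<dots> \<le> 1 / 2"
    using \<epsilon> n by (simp add: field_simps)
  finally show False by simp
qed

lemma Hpipe_abs_snd_less_one: "(a, b) \<in> Hpipe \<Longrightarrow> \<bar>b\<bar> < 1"
proof -
  assume "(a, b) \<in> Hpipe"
  then consider "a^2 + b^2 < 1" | "\<bar>b\<bar> < 1" unfolding Hpipe_def by auto
  then show "\<bar>b\<bar> < 1"
  proof cases
    case 1
    then have "b^2 < 1" using zero_le_power2[of a] by linarith
    then show ?thesis using abs_square_less_1 by blast
  qed
qed

lemma H_eps_top_outside: "(x, 2) \<notin> H_eps n \<epsilon>"
  using Hpipe_abs_snd_less_one[of x 2] by (auto simp: H_eps_def T_eps_def)

lemma H_eps_tooth_sides_outside:
  fixes n i :: nat and \<epsilon> s t :: real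
  assumes n: "n \<ge> 1" and \<epsilon>: "\<epsilon> \<le> 1 / (4 * real n)" and t: "1 \<le> t" and s: "\<bar>s\<bar> = \<epsilon>"
  shows "(2 + real i / real n + s, t) \<notin> H_eps n \<epsilon>"
proof
  assume "(2 + real i / real n + s, t) \<in> H_eps n \<epsilon>"
  moreover have "(2 + real i / real n + s, t) \<notin> Hpipe"
    using Hpipe_abs_snd_less_one t by fastforce
  ultimately obtain j where "2 + real i / real n + s \<in> Sigma_eps n \<epsilon> j"
    unfolding H_eps_def T_eps_def by blast
  then have j: "\<bar>(real i / real n + s) - real j / real n\<bar> < \<epsilon>"
    unfolding Sigma_eps_def by auto
  then have "i = j"
    using s by (intro tooth_centres_separated[OF n \<epsilon>]) linarith
  then show False using j s by simp
qed

lemma Sigma_eps_subset: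
  fixes n i :: nat and \<epsilon> :: real
  assumes n: "n \<ge> 1" and \<epsilon>: "\<epsilon> \<le> 1 / (4 * real n)" and i: "i \<le> n"
  shows "Sigma_eps n \<epsilon> i \<subseteq> {1..4}"
proof -
  have "real i / real n \<le> 1" using i n by (simp add: divide_le_eq_1)
  moreover have "0 \<le> real i / real n" by simp
  moreover have "\<epsilon> \<le> 1/4"
    using \<epsilon> n by (smt (verit) frac_le le_divide_eq_1 of_nat_1 of_nat_le_iff)
  ultimately show ?thesis
    unfolding Sigma_eps_def subset_iff greaterThanLessThan_iff atLeastAtMost_iff by linarith
qed

lemma teeth_disjoint:
  fixes n :: nat and \<epsilon> :: real
  assumes n: "n \<ge> 1" and \<epsilon>: "\<epsilon> \<le> 1 / (4 * real n)"
  shows "disjoint_family_on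
           (\<lambda>i. cbox (2 + real i / real n - \<epsilon>, 1) (2 + real i / real n + \<epsilon>, 2::real)) I"
  unfolding disjoint_family_on_def
proof (intro ballI impI equals0I)
  fix i j z assume "i \<noteq> j"
    and "z \<in> cbox (2 + real i / real n - \<epsilon>, 1) (2 + real i / real n + \<epsilon>, 2::real)
             \<inter> cbox (2 + real j / real n - \<epsilon>, 1) (2 + real j / real n + \<epsilon>, 2)"
  then have "\<bar>real i / real n - real j / real n\<bar> \<le> 2 * \<epsilon>"
    by (cases z) (auto simp: abs_le_iff)
  with \<open>i \<noteq> j\<close> show False using tooth_centres_separated[OF n \<epsilon>] by blast
qed

lemma test_fun_boundary_term_le:
  fixes d :: "real \<Rightarrow> real" and n :: nat and \<epsilon> M :: real
  assumes n: "n \<ge> 1" and \<epsilon>: "0 < \<epsilon>" "\<epsilon> \<le> 1 / (4 * real n)" and M: "0 \<le> M"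
    and d: "AE x in lborel. x \<in> {1..4} \<longrightarrow> \<bar>d x\<bar> \<le> M"
    and \<phi>: "test_fun (H_eps n \<epsilon>) \<phi>"
  shows "2 * (LINT x1:Gamma_eps n \<epsilon>|lborel. d x1 * \<phi> (x1, 1)) - (\<integral>x. sqn (grad \<phi> x) \<partial>lborel)
           \<le> 2 * real (n + 1) * \<epsilon>^2 * M^2"
proof -
  define c where "c i = 2 + real i / real n" for i
  define Q where "Q i = cbox (c i - \<epsilon>, 1) (c i + \<epsilon>, 2::real)" for i
  define F where "F z = sqn (grad \<phi> z)" for z
  note partials = test_fun_partials[OF \<phi>]
  have tooth: "2 * M * integral {c i - \<epsilon>..c i + \<epsilon>} (\<lambda>x. \<bar>\<phi> (x,1)\<bar>) \<le> integral (Q i) F + 2 * M^2 * \<epsilon>^2"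
    for i
  proof -
    have side: "\<phi> (c i + s, t) = 0" if "1 \<le> t" "\<bar>s\<bar> = \<epsilon>" for s t
      using H_eps_tooth_sides_outside[OF n \<epsilon>(2) that] by (simp add: c_def test_fun_zero_outside[OF \<phi>])
    have sides: "\<phi> (c i - \<epsilon>, t) = 0 \<and> \<phi> (c i + \<epsilon>, t) = 0" if "t \<in> {1..2}" for t
      using side[of t "-\<epsilon>"] side[of t \<epsilon>] that \<epsilon>(1) by simp
    have top: "\<phi> (x, 2) = 0" for x
      by (rule test_fun_zero_outside[OF \<phi> H_eps_top_outside])
    show ?thesis
      using rectangle_energy_bound[of \<epsilon> \<phi> "\<lambda>z. fst (grad \<phi> z)" "\<lambda>z. snd (grad \<phi> z)",
          OF \<epsilon>(1) partials top sides]
      unfolding Q_def F_def sqn_def .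
  qed
  have "(LINT x1:Gamma_eps n \<epsilon>|lborel. d x1 * \<phi> (x1, 1))
          \<le> M * (\<Sum>i\<in>{0..n}. integral {c i - \<epsilon>..c i + \<epsilon>} (\<lambda>x. \<bar>\<phi> (x,1)\<bar>))"
    unfolding Gamma_eps_def
  proof (rule set_integral_union_le_sum)
    show "continuous_on UNIV (\<lambda>x. \<phi> (x, 1))"
      using continuous_on_compose2[OF partials(1) continuous_on_Pair[OF continuous_on_id continuous_on_const]]
      by simp
    show "Sigma_eps n \<epsilon> i \<subseteq> {c i - \<epsilon>..c i + \<epsilon>}" for i
      unfolding Sigma_eps_def c_def by auto
    show "AE x in lborel. x \<in> (\<Union>i\<in>{0..n}. Sigma_eps n \<epsilon> i) \<longrightarrow> \<bar>d x\<bar> \<le> M"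
      using d
    proof (rule eventually_mono)
      fix x assume "x \<in> {1..4} \<longrightarrow> \<bar>d x\<bar> \<le> M"
      then show "x \<in> (\<Union>i\<in>{0..n}. Sigma_eps n \<epsilon> i) \<longrightarrow> \<bar>d x\<bar> \<le> M"
        using Sigma_eps_subset[OF n \<epsilon>(2)] by fastforce
    qed
  qed (use M in auto)
  then have "2 * (LINT x1:Gamma_eps n \<epsilon>|lborel. d x1 * \<phi> (x1, 1))
          \<le> 2 * (M * (\<Sum>i\<in>{0..n}. integral {c i - \<epsilon>..c i + \<epsilon>} (\<lambda>x. \<bar>\<phi> (x,1)\<bar>)))"
    by simp
  also have "\<dots> = (\<Sum>i\<in>{0..n}. 2 * M * integral {c i - \<epsilon>..c i + \<epsilon>} (\<lambda>x. \<bar>\<phi> (x,1)\<bar>))"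
    by (simp add: sum_distrib_left mult.assoc)
  also have "\<dots> \<le> (\<Sum>i\<in>{0..n}. integral (Q i) F + 2 * M^2 * \<epsilon>^2)"
    by (intro sum_mono tooth)
  also have "\<dots> = (\<Sum>i\<in>{0..n}. integral (Q i) F) + 2 * real (n + 1) * \<epsilon>^2 * M^2"
    by (simp add: sum.distrib)
  also have "(\<Sum>i\<in>{0..n}. integral (Q i) F) \<le> integral\<^sup>L lborel F"
    using teeth_disjoint[OF n \<epsilon>(2)] test_fun_integrable_sqn_grad[OF \<phi>]
    unfolding Q_def c_def F_def
    by (intro sum_integral_disjoint_le_integral) (auto simp: sqn_def)
  finally show ?thesis unfolding F_def by simp
qed

lemma AE_le_Linf_norm_14: "AE x in lborel. x \<in> {1..4} \<longrightarrow> ereal \<bar>f x\<bar> \<le> Linf_norm_14 f"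
proof -
  have "AE x in restrict_space lborel {1..4}. ereal \<bar>f x\<bar> \<le> Linf_norm_14 f"
    unfolding Linf_norm_14_def by (rule esssup_AE)
  then show ?thesis by (subst (asm) AE_restrict_space_iff) auto
qed

lemma Tors_le:
  assumes n: "n \<ge> 1" and \<epsilon>: "0 < \<epsilon>" "\<epsilon> \<le> 1 / (4 * real n)" and M: "0 \<le> M"
    and trace: "AE x in lborel. x \<in> {1..4} \<longrightarrow> \<bar>dtrace u x\<bar> \<le> M"
  shows "Tors u n \<epsilon> \<le> ereal (2 * real (n + 1) * \<epsilon>^2 * M^2)"
  unfolding Tors_def
  using test_fun_boundary_term_le[OF n \<epsilon> M trace] by (intro SUP_least) simp

theorem mainTheorem9:
  fixes u :: "real \<times> real \<Rightarrow> real" and g :: "real \<times> real \<Rightarrow> real \<times> real"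
    and n :: nat and \<epsilon> :: real
  assumes u: "first_dirichlet_eigenfunction Hpipe u g"
    and trace_ex: "\<forall>x1>0. \<exists>d. ((\<lambda>t. u (x1, t)) has_real_derivative d) (at_left 1)"
    and n: "n \<ge> 1"
    and eps: "0 < \<epsilon>" "\<epsilon> \<le> 1 / (4 * real n)"
  shows "Tors u n \<epsilon> \<le> ereal (2 * real (n + 1) * \<epsilon>^2) * (Linf_norm_14 (dtrace u) * Linf_norm_14 (dtrace u))"
proof (cases "Linf_norm_14 (dtrace u)")
  \<comment> \<open>Only the \<open>L\<^sup>\<infinity>\<close> bound on the trace enters.\<close>
  case (real M)
  have "AE x in lborel. x \<in> {1..4} \<longrightarrow> \<bar>dtrace u x\<bar> \<le> \<bar>M\<bar>"
    using AE_le_Linf_norm_14[of "dtrace u"] by (rule eventually_mono) (auto simp: real)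
  from Tors_le[OF n eps abs_ge_zero this]
  show ?thesis by (simp add: real power2_eq_square)
qed (use eps in simp_all)

end
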